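(* Let $S_1,\dots,S_n$ be i.i.d. samples, $f(x;S)$ a loss, $f_i(x)=f(x;S_i)$, $F(x)=\mathbb{E}[f(x;S)]$, $\bar F(x)=\frac1n\sum_{i=1}^nf_i(x)$. Let $x_0=0,x_1,\dots,x_K$ be candidate models and let $\tau_1,\dots,\tau_K\ge0$ satisfy, for some $\delta\in(0,1)$, \[ \mathbb{P}\big(\exists k\in\{0,\dots,K\}:\ |F(x_k)-\bar F(x_k)-(F(0)-\bar F(0))|>\tau_k\big)\le\delta, \] with $\tau_0:=0$. Let $\gamma\in[1,\infty)$ and let $k_{\mathrm{rely}}$ be the output of the Reliable Model Selection procedure. Then with probability at least $1-\delta$, $F(x_{k_{\mathrm{rely}}})\le F(x_k)+(1+\gamma)\tau_k$ for all $k\in\{0,\dots,K\}$.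
   Context: Reliable Model Selection with parameter $\gamma\in[1,\infty)$, candidates $x_0,\dots,x_K$, samples $f_1,\dots,f_n$ and widths $\tau_1,\dots,\tau_K$ (with $\tau_0:=0$): set $\theta=\min_{k\in\{0,\dots,K\}}\bar F(x_k)+\gamma\tau_k$, set $\mathcal{F}=\{k\in\{0,\dots,K\}:\bar F(x_k)+\tau_k\le\theta\}$, and output $k_{\mathrm{rely}}\in\arg\min_{k\in\mathcal{F}}\bar F(x_k)$. *)

theory Defs
  imports "HOL-Probability.Probability"
begin

(* Population risk F(x) = E[f(x;S)], with S distributed like the first sample S 1 *)
definition pop_risk :: "'w measure \<Rightarrow> (nat \<Rightarrow> 'w \<Rightarrow> 's) \<Rightarrow> ('x \<Rightarrow> 's \<Rightarrow> real) \<Rightarrow> 'x \<Rightarrow> real" where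
  "pop_risk M S f x = (\<integral>\<omega>. f x (S 1 \<omega>) \<partial>M)"

definition emp_risk :: "nat \<Rightarrow> (nat \<Rightarrow> 'w \<Rightarrow> 's) \<Rightarrow> ('x \<Rightarrow> 's \<Rightarrow> real) \<Rightarrow> 'w \<Rightarrow> 'x \<Rightarrow> real" where
  "emp_risk n S f \<omega> x = (\<Sum>i=1..n. f x (S i \<omega>)) / real n"

(* Reliable Model Selection; Fb k = \<bar>F(x_k), tau k = \<tau>_k *)
definition rms_theta :: "real \<Rightarrow> nat \<Rightarrow> (nat \<Rightarrow> real) \<Rightarrow> (nat \<Rightarrow> real) \<Rightarrow> real" where
  "rms_theta \<gamma> K Fb tau = Min ((\<lambda>k. Fb k + \<gamma> * tau k) ` {0..K})"

definition rms_feasible :: "real \<Rightarrow> nat \<Rightarrow> (nat \<Rightarrow> real) \<Rightarrow> (nat \<Rightarrow> real) \<Rightarrow> nat set" where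
  "rms_feasible \<gamma> K Fb tau = {k \<in> {0..K}. Fb k + tau k \<le> rms_theta \<gamma> K Fb tau}"

definition rms_output :: "real \<Rightarrow> nat \<Rightarrow> (nat \<Rightarrow> real) \<Rightarrow> (nat \<Rightarrow> real) \<Rightarrow> nat \<Rightarrow> bool" where
  "rms_output \<gamma> K Fb tau k \<longleftrightarrow>
     k \<in> rms_feasible \<gamma> K Fb tau \<and> (\<forall>j \<in> rms_feasible \<gamma> K Fb tau. Fb k \<le> Fb j)"

end

theory Submission
  imports Defs
begin

(* On the event that every deviation F(x_k) - Fb(x_k) lies within tau_k of the reference
   deviation F(0) - Fb(0), the guarantee is deterministic: the selected index is feasible,
   so Fb(x_rely) + tau_rely <= theta <= Fb(x_k) + gamma tau_k, and transferring both
   sides from Fb to F costs tau_rely + tau_k.  The common offset F(0) - Fb(0) cancels. *)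

lemma rms_theta_le:
  assumes "k \<in> {0..K}"
  shows "rms_theta \<gamma> K Fb tau \<le> Fb k + \<gamma> * tau k"
  unfolding rms_theta_def using assms by (intro Min_le) auto

lemma rms_feasible_risk_le:
  fixes F Fb tau :: "nat \<Rightarrow> real"
  assumes dev: "\<And>j. j \<in> {0..K} \<Longrightarrow> \<bar>F j - Fb j - c\<bar> \<le> tau j"
    and feasible: "k' \<in> rms_feasible \<gamma> K Fb tau"
    and k: "k \<in> {0..K}"
  shows "F k' \<le> F k + (1 + \<gamma>) * tau k"
proof -
  have k': "k' \<in> {0..K}"
    using feasible unfolding rms_feasible_def by auto
  have "Fb k' + tau k' \<le> rms_theta \<gamma> K Fb tau"
    using feasible unfolding rms_feasible_def by auto
  also have "\<dots> \<le> Fb k + \<gamma> * tau k"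
    using k by (rule rms_theta_le)
  finally have "Fb k' + tau k' \<le> Fb k + \<gamma> * tau k" .
  with dev[OF k'] dev[OF k] show ?thesis
    by (simp add: abs_le_iff algebra_simps)
qed

lemma rms_output_risk_le:
  fixes F Fb tau :: "nat \<Rightarrow> real"
  assumes "\<And>j. j \<in> {0..K} \<Longrightarrow> \<bar>F j - Fb j - c\<bar> \<le> tau j"
    and "rms_output \<gamma> K Fb tau k'"
    and "k \<in> {0..K}"
  shows "F k' \<le> F k + (1 + \<gamma>) * tau k"
  using assms rms_feasible_risk_le unfolding rms_output_def by blast

lemma emp_risk_measurable:
  assumes "\<forall>i\<in>{1..n}. S i \<in> measurable M N"
    and "f x \<in> borel_measurable N"
  shows "(\<lambda>\<omega>. emp_risk n S f \<omega> x) \<in> borel_measurable M"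
proof -
  have "(\<lambda>\<omega>. f x (S i \<omega>)) \<in> borel_measurable M" if "i \<in> {1..n}" for i
    using assms that by (metis measurable_compose)
  then show ?thesis
    unfolding emp_risk_def by (intro borel_measurable_divide borel_measurable_sum) auto
qed

lemma (in prob_space) ex_event_prob_ge_if_prob_failure_le:
  assumes "{\<omega> \<in> space M. \<not> P \<omega>} \<in> events"
    and "prob {\<omega> \<in> space M. \<not> P \<omega>} \<le> \<delta>"
  shows "\<exists>A\<in>events. prob A \<ge> 1 - \<delta> \<and> (\<forall>\<omega>\<in>A. P \<omega>)"
proof -
  have eq: "{\<omega> \<in> space M. P \<omega>} = space M - {\<omega> \<in> space M. \<not> P \<omega>}"
    by auto
  then have "{\<omega> \<in> space M. P \<omega>} \<in> events"
    using assms(1) by auto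
  moreover have "prob {\<omega> \<in> space M. P \<omega>} \<ge> 1 - \<delta>"
    using assms prob_compl eq by auto
  ultimately show ?thesis
    by blast
qed
theorem lemma1:
  fixes M :: "'w measure" and N :: "'s measure"
    and S :: "nat \<Rightarrow> 'w \<Rightarrow> 's" and f :: "'x::zero \<Rightarrow> 's \<Rightarrow> real"
    and n K :: nat and xs :: "nat \<Rightarrow> 'x" and tau :: "nat \<Rightarrow> real"
    and \<delta> \<gamma> :: real and krely :: "'w \<Rightarrow> nat"
  assumes "prob_space M"
    and "n \<ge> 1"
    and "\<forall>i\<in>{1..n}. S i \<in> measurable M N"
    and "prob_space.indep_vars M (\<lambda>_. N) S {1..n}"
    and "\<forall>i\<in>{1..n}. distr M N (S i) = distr M N (S 1)"
    and "\<forall>x. f x \<in> borel_measurable N"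
    and "xs 0 = 0"
    and "tau 0 = 0"
    and "\<forall>k\<in>{1..K}. tau k \<ge> 0"
    and "0 < \<delta>" and "\<delta> < 1"
    and "measure M {\<omega> \<in> space M. \<exists>k\<in>{0..K}.
            \<bar>pop_risk M S f (xs k) - emp_risk n S f \<omega> (xs k)
             - (pop_risk M S f 0 - emp_risk n S f \<omega> 0)\<bar> > tau k} \<le> \<delta>"
    and "\<gamma> \<ge> 1"
    and "\<forall>\<omega>\<in>space M. rms_output \<gamma> K (\<lambda>k. emp_risk n S f \<omega> (xs k)) tau (krely \<omega>)"
  shows "\<exists>A\<in>sets M. measure M A \<ge> 1 - \<delta> \<and>
           (\<forall>\<omega>\<in>A. \<forall>k\<in>{0..K}.
              pop_risk M S f (xs (krely \<omega>)) \<le> pop_risk M S f (xs k) + (1 + \<gamma>) * tau k)"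
proof -
  interpret prob_space M by fact
  let ?F = "\<lambda>k. pop_risk M S f (xs k)"
  let ?Fb = "\<lambda>\<omega> k. emp_risk n S f \<omega> (xs k)"
  let ?dev = "\<lambda>\<omega> k. ?F k - ?Fb \<omega> k - (pop_risk M S f 0 - emp_risk n S f \<omega> 0)"
  let ?good = "\<lambda>\<omega>. \<forall>k\<in>{0..K}. \<bar>?dev \<omega> k\<bar> \<le> tau k"
  have "(\<lambda>\<omega>. emp_risk n S f \<omega> x) \<in> borel_measurable M" for x
    using assms(3,6) by (intro emp_risk_measurable) auto
  then have "{\<omega> \<in> space M. tau k < \<bar>?dev \<omega> k\<bar>} \<in> events" for k
    by (intro borel_measurable_less borel_measurable_abs borel_measurable_diff) auto
  moreover have "{\<omega> \<in> space M. \<not> ?good \<omega>} = (\<Union>k\<in>{0..K}. {\<omega> \<in> space M. tau k < \<bar>?dev \<omega> k\<bar>})"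
    by (auto simp: not_le)
  ultimately have "{\<omega> \<in> space M. \<not> ?good \<omega>} \<in> events"
    by (simp add: sets.finite_UN)
  moreover have "prob {\<omega> \<in> space M. \<not> ?good \<omega>} \<le> \<delta>"
    using assms(12) by (simp add: not_le)
  ultimately obtain A where "A \<in> events" "prob A \<ge> 1 - \<delta>" and good: "\<forall>\<omega>\<in>A. ?good \<omega>"
    using ex_event_prob_ge_if_prob_failure_le[of ?good \<delta>] by blast
  moreover have "?F (krely \<omega>) \<le> ?F k + (1 + \<gamma>) * tau k" if "\<omega> \<in> A" "k \<in> {0..K}" for \<omega> k
  proof (rule rms_output_risk_le)
    show "\<And>j. j \<in> {0..K} \<Longrightarrow> \<bar>?dev \<omega> j\<bar> \<le> tau j"
      using good \<open>\<omega> \<in> A\<close> by blast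
    have "\<omega> \<in> space M"
      using \<open>A \<in> events\<close> \<open>\<omega> \<in> A\<close> sets.sets_into_space by blast
    then show "rms_output \<gamma> K (?Fb \<omega>) tau (krely \<omega>)"
      using assms(14) by blast
  qed (fact that(2))
  ultimately show ?thesis
    by blast
qed

end
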